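(* Let $p>3$ be a prime, $e\in\{3,4,6\}$ with $e\mid p+1$, $k\ge1$, $\alpha\in\mathbb{P}^1(\mathbb{Q}_p)$ with $v(\alpha^{-1})\ge0$, and let $g_k(x)=x^{p^{2k}}+\sum_{n=1}^k(-1)^np^n(x^{p^{2k-2n}}+\alpha^{-1}\pi_e^2x^{p^{2k+1-2n}})$. Let $n\in\{0,\dots,k\}$, $a\in\mathbb{C}_p$, and let $\gamma$ be a root of $g_k$ maximising $v(a-\gamma)$ among the roots of $g_k$. If $v(g_k(a))>k-n+\frac{1}{p^2-1}$, then $v(a-\gamma)>\frac{1}{p^{2n}(p^2-1)}$. If moreover $v(g_k(a))\le k-n+1+\frac{1}{p^2-1}$, then $v(a-\gamma)=\frac{1}{p^{2n}}\big(v(g_k(a))-k+n\big)$.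
   Context: $v$ is the $p$-adic valuation on $\mathbb{C}_p$ with $v(p)=1$; $\pi_e\in\overline{\mathbb{Q}}_p$ is a fixed root of $x^e+p$; convention $\alpha^{-1}=0$ if $\alpha=\infty$. *)

theory Defs
  imports "HOL-Analysis.Analysis" "HOL-Computational_Algebra.Polynomial" "HOL-Library.Extended_Real"
begin

definition is_valuation :: "('a::field \<Rightarrow> ereal) \<Rightarrow> bool" where
  "is_valuation v \<longleftrightarrow>
     (\<forall>x. v x = \<infinity> \<longleftrightarrow> x = 0) \<and>
     (\<forall>x. v x \<noteq> -\<infinity>) \<and>
     (\<forall>x y. v (x * y) = v x + v y) \<and>
     (\<forall>x y. min (v x) (v y) \<le> v (x + y))"

definition v_cauchy :: "('a::field \<Rightarrow> ereal) \<Rightarrow> (nat \<Rightarrow> 'a) \<Rightarrow> bool" where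
  "v_cauchy v X \<longleftrightarrow> (\<forall>M::real. \<exists>N. \<forall>m\<ge>N. \<forall>n\<ge>N. ereal M \<le> v (X m - X n))"

definition v_converges_to :: "('a::field \<Rightarrow> ereal) \<Rightarrow> (nat \<Rightarrow> 'a) \<Rightarrow> 'a \<Rightarrow> bool" where
  "v_converges_to v X L \<longleftrightarrow> (\<forall>M::real. \<exists>N. \<forall>n\<ge>N. ereal M \<le> v (X n - L))"

definition Qp_set :: "('a::field_char_0 \<Rightarrow> ereal) \<Rightarrow> 'a set" where
  "Qp_set v = {x. \<forall>M::real. \<exists>q::rat. ereal M \<le> v (x - of_rat q)}"

text \<open>Such a field is isometrically isomorphic to C_p.\<close>
definition is_Cp_model :: "nat \<Rightarrow> ('a::field_char_0 \<Rightarrow> ereal) \<Rightarrow> bool" where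
  "is_Cp_model p v \<longleftrightarrow>
     is_valuation v \<and>
     v (of_nat p) = 1 \<and>
     (\<forall>X. v_cauchy v X \<longrightarrow> (\<exists>L. v_converges_to v X L)) \<and>
     (\<forall>q::'a poly. 0 < degree q \<longrightarrow> (\<exists>x. poly q x = 0)) \<and>
     (\<forall>x. \<forall>M::real. \<exists>y. ereal M \<le> v (x - y) \<and>
          (\<exists>q::'a poly. q \<noteq> 0 \<and> (\<forall>i. coeff q i \<in> Qp_set v) \<and> poly q y = 0))"

text \<open>g_k(x) = x^(p^(2k)) + sum_{n=1}^k (-1)^n p^n (x^(p^(2k-2n)) + beta pi^2 x^(p^(2k+1-2n))),
  where beta = alpha^(-1).\<close>
definition g_poly_fun :: "nat \<Rightarrow> nat \<Rightarrow> 'a::field \<Rightarrow> 'a \<Rightarrow> 'a \<Rightarrow> 'a" where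
  "g_poly_fun p k \<beta> \<pi> x =
     x ^ (p ^ (2*k)) +
     (\<Sum>n=1..k. (-1) ^ n * of_nat p ^ n *
        (x ^ (p ^ (2*k - 2*n)) + \<beta> * \<pi>^2 * x ^ (p ^ (2*k + 1 - 2*n))))"

end

theory Submission
  imports Defs
begin

(* Put z = a - gamma and H(X) = g_k(gamma + X).  Roots of g_k are integral, so v(gamma) >= 0, and
   since p^(t - v_p(j)) divides binom(p^t, j), the coefficient of X^j in H has valuation at least
   k - m when p^(2m) <= j < p^(2m+2), with equality at j = p^(2m); moreover H(0) = 0.
   As gamma is a root closest to a, no root of H is closer to z than 0.  Factoring H into linear
   factors then gives v(H(z)) <= v(c_j z^j) for every coefficient c_j, while the ultrametric
   inequality gives v(H(z)) >= min_j v(c_j z^j).  So v(g_k(a)) lies between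
   min_m (k - m + p^(2m) v(z)) and k - n + p^(2n) v(z): the lower bound on v(g_k(a)) yields
   v(z) > 1/(p^(2n)(p^2-1)), and the upper bound then forces the minimum to sit at m = n. *)

locale valued_field =
  fixes v :: "'a::field \<Rightarrow> ereal"
  assumes valuation: "is_valuation v"
begin

lemma v_eq_infinity_iff [simp]: "v x = \<infinity> \<longleftrightarrow> x = 0"
  using valuation unfolding is_valuation_def by blast

lemma v_not_minus_infinity [simp]: "v x \<noteq> -\<infinity>"
  using valuation unfolding is_valuation_def by blast

lemma v_mult: "v (x * y) = v x + v y"
  using valuation unfolding is_valuation_def by blast

lemma v_add_ge_min: "min (v x) (v y) \<le> v (x + y)"
  using valuation unfolding is_valuation_def by blast

lemma v_zero [simp]: "v 0 = \<infinity>"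
  by simp

lemma v_finite: "x \<noteq> 0 \<Longrightarrow> \<exists>r. v x = ereal r"
  by (cases "v x") auto

lemma v_one [simp]: "v 1 = 0"
  using v_mult[of 1 1] v_finite[of 1] by auto

lemma v_minus [simp]: "v (- x) = v x"
proof -
  have "v (-1) + v (-1) = 0"
    using v_mult[of "-1" "-1"] by simp
  then have "v (-1) = 0"
    using v_finite[of "-1"] by auto
  then show ?thesis
    using v_mult[of "-1" x] by simp
qed

lemma v_diff_commute: "v (x - y) = v (y - x)"
  by (metis minus_diff_eq v_minus)

lemma v_power: "v (x ^ n) = ereal (real n) * v x"
proof (induction n)
  case (Suc n)
  then show ?case
    using v_finite[of x] by (cases "x = 0") (auto simp: v_mult algebra_simps)
qed simp

lemma v_add_ge: "B \<le> v x \<Longrightarrow> B \<le> v y \<Longrightarrow> B \<le> v (x + y)"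
  using v_add_ge_min[of x y] by (meson min.boundedI order_trans)

lemma v_diff_ge: "B \<le> v x \<Longrightarrow> B \<le> v y \<Longrightarrow> B \<le> v (x - y)"
  using v_add_ge[of B x "- y"] by simp

lemma v_sum_ge: "(\<And>i. i \<in> A \<Longrightarrow> B \<le> v (f i)) \<Longrightarrow> B \<le> v (sum f A)"
  by (induction A rule: infinite_finite_induct) (auto intro: v_add_ge)

lemma v_add_eq_left:
  assumes "v x < v y"
  shows "v (x + y) = v x"
proof -
  have "min (v (x + y)) (v (- y)) \<le> v x"
    using v_add_ge_min[of "x + y" "- y"] by simp
  with assms have "v (x + y) \<le> v x"
    by (auto simp: min_def split: if_splits)
  moreover have "v x \<le> v (x + y)"
    using v_add_ge_min[of x y] assms by simp
  ultimately show ?thesis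
    by simp
qed

lemma v_of_nat_nonneg: "0 \<le> v (of_nat n)"
  by (induction n) (auto intro: v_add_ge)

lemma v_nonneg_of_power_nonneg:
  assumes "0 < n" "0 \<le> v (x ^ n)"
  shows "0 \<le> v x"
  using assms v_finite[of x] by (cases "x = 0") (auto simp: v_power zero_le_mult_iff)

end

lemma poly_splits_into_linear_factors:
  fixes f :: "'a::field poly"
  assumes alg_closed: "\<forall>q::'a poly. 0 < degree q \<longrightarrow> (\<exists>x. poly q x = 0)" and "f \<noteq> 0"
  obtains c ws where "c \<noteq> 0" and "f = smult c (\<Prod>w\<leftarrow>ws. [:- w, 1:])"
  using assms(2)
proof (induction "degree f" arbitrary: f thesis rule: less_induct)
  case less
  show ?case
  proof (cases "degree f = 0")
    case True
    then obtain c where "f = [:c:]"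
      using degree_eq_zeroE by blast
    with less.prems show ?thesis
      using less.prems(1)[of c "[]"] by simp
  next
    case False
    then obtain x where "poly f x = 0"
      using alg_closed by auto
    then obtain q where f: "f = [:- x, 1:] * q"
      by (metis dvdE poly_eq_0_iff_dvd)
    with less.prems have "q \<noteq> 0"
      by auto
    then have "degree q < degree f"
      unfolding f by (subst degree_mult_eq) auto
    then obtain c ws where "c \<noteq> 0" "q = smult c (\<Prod>w\<leftarrow>ws. [:- w, 1:])"
      using less.hyps \<open>q \<noteq> 0\<close> by blast
    then show ?thesis
      using less.prems(1)[of c "x # ws"] f by (simp add: mult_smult_right)
  qed
qed

context valued_field
begin

lemma v_coeff_linear_factors_ge:
  "(\<Sum>w\<leftarrow>ws. min (v z) (v w)) \<le> v (coeff (\<Prod>w\<leftarrow>ws. [:- w, 1:]) j * z ^ j)"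
proof (induction ws arbitrary: j)
  case Nil
  then show ?case
    by (cases j) simp_all
next
  case (Cons w ws)
  define q where "q = (\<Prod>w\<leftarrow>ws. [:- w, 1:])"
  define S where "S = (\<Sum>w\<leftarrow>ws. min (v z) (v w))"
  have IH: "S \<le> v (coeff q i * z ^ i)" for i
    using Cons.IH unfolding q_def S_def .
  have "coeff ([:- w, 1:] * q) j * z ^ j
      = coeff (pCons 0 q) j * z ^ j - w * (coeff q j * z ^ j)"
    by (simp add: algebra_simps)
  moreover have "min (v z) (v w) + S \<le> v (w * (coeff q j * z ^ j))"
    using add_mono[OF min.cobounded2 IH] by (simp add: v_mult)
  moreover have "min (v z) (v w) + S \<le> v (coeff (pCons 0 q) j * z ^ j)"
  proof (cases j)
    case (Suc i)
    have "coeff (pCons 0 q) j * z ^ j = z * (coeff q i * z ^ i)"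
      by (simp add: Suc)
    then show ?thesis
      using add_mono[OF min.cobounded1 IH] by (simp add: v_mult)
  qed simp
  ultimately show ?case
    unfolding q_def S_def by (simp add: v_diff_ge)
qed

lemma v_poly_le_v_monomial:
  assumes alg_closed: "\<forall>q::'a poly. 0 < degree q \<longrightarrow> (\<exists>x. poly q x = 0)"
    and "f \<noteq> 0" and no_closer_root: "\<And>w. poly f w = 0 \<Longrightarrow> v (z - w) \<le> v z"
  shows "v (poly f z) \<le> v (coeff f j * z ^ j)"
proof -
  obtain c ws where "c \<noteq> 0" and f: "f = smult c (\<Prod>w\<leftarrow>ws. [:- w, 1:])"
    using poly_splits_into_linear_factors[OF alg_closed \<open>f \<noteq> 0\<close>] by blast
  have "poly (\<Prod>w\<leftarrow>ws. [:- w, 1:]) x = (\<Prod>w\<leftarrow>ws. x - w)" for x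
    by (induction ws) (simp_all add: left_diff_distrib)
  then have poly_f: "poly f x = c * (\<Prod>w\<leftarrow>ws. x - w)" for x
    by (simp add: f)
  have "v (z - w) \<le> min (v z) (v w)" if "w \<in> set ws" for w
  proof -
    have "v (z - w) \<le> v z"
      using no_closer_root that by (simp add: poly_f prod_list_zero_iff)
    moreover have "min (v z) (v (z - w)) \<le> v w"
      using v_add_ge_min[of z "w - z"] by (simp add: v_diff_commute)
    ultimately show ?thesis
      by (simp add: min_absorb2)
  qed
  then have "(\<Sum>w\<leftarrow>ws. v (z - w)) \<le> (\<Sum>w\<leftarrow>ws. min (v z) (v w))"
    by (intro sum_list_mono)
  also have "\<dots> \<le> v (coeff (\<Prod>w\<leftarrow>ws. [:- w, 1:]) j * z ^ j)"
    by (rule v_coeff_linear_factors_ge)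
  finally have factors_le: "(\<Sum>w\<leftarrow>ws. v (z - w)) \<le> v (coeff (\<Prod>w\<leftarrow>ws. [:- w, 1:]) j * z ^ j)" .
  have "v (\<Prod>w\<leftarrow>ws. z - w) = (\<Sum>w\<leftarrow>ws. v (z - w))"
    by (induction ws) (simp_all add: v_mult)
  then have "v (poly f z) = v c + (\<Sum>w\<leftarrow>ws. v (z - w))"
    by (simp add: poly_f v_mult)
  also have "\<dots> \<le> v c + v (coeff (\<Prod>w\<leftarrow>ws. [:- w, 1:]) j * z ^ j)"
    using factors_le by (rule add_left_mono)
  also have "\<dots> = v (coeff f j * z ^ j)"
    by (simp add: f v_mult mult.assoc)
  finally show ?thesis .
qed

end

lemma multiplicity_prime_power_choose:
  fixes p t j :: nat
  assumes "prime p" "1 \<le> j" "j \<le> p ^ t"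
  shows "t \<le> multiplicity p j + multiplicity p (p ^ t choose j)"
proof -
  obtain i where j: "j = Suc i"
    using assms(2) by (cases j) auto
  have choose_pos: "(p ^ t choose j) \<noteq> 0"
    using assms(3) by simp
  have "j * (p ^ t choose j) = p ^ t * ((p ^ t - 1) choose i)"
    unfolding j by (rule binomial_absorption)
  then have "p ^ t dvd j * (p ^ t choose j)"
    by simp
  then have "t \<le> multiplicity p (j * (p ^ t choose j))"
    using assms choose_pos by (subst power_dvd_iff_le_multiplicity[symmetric]) auto
  also have "\<dots> = multiplicity p j + multiplicity p (p ^ t choose j)"
    using assms choose_pos by (intro prime_elem_multiplicity_mult_distrib) auto
  finally show ?thesis .
qed

lemma coeff_linear_power_eq_0: "n < j \<Longrightarrow> coeff ([:a, b:] ^ n) j = 0"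
  using degree_power_le[of "[:a, b:]" n] by (intro coeff_eq_0) (auto split: if_splits)

context valued_field
begin

lemma v_of_nat_ge_multiplicity:
  assumes "v (of_nat p) = 1"
  shows "ereal (real (multiplicity p m)) \<le> v (of_nat m)"
proof -
  obtain r where "m = p ^ multiplicity p m * r"
    using multiplicity_dvd by blast
  then have "v (of_nat m) = ereal (real (multiplicity p m)) + v (of_nat r)"
    by (metis assms mult_1_right of_nat_mult of_nat_power v_mult v_power)
  then show ?thesis
    using v_of_nat_nonneg[of r] by (simp add: add_increasing2)
qed

lemma v_coeff_linear_power_prime_power:
  assumes "prime p" "v (of_nat p) = 1" "0 \<le> v \<gamma>" "1 \<le> j"
  shows "ereal (real t - real (multiplicity p j)) \<le> v (coeff ([:\<gamma>, 1:] ^ p ^ t) j)"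
proof (cases "j \<le> p ^ t")
  case True
  have "coeff ([:\<gamma>, 1:] ^ p ^ t) j = of_nat (p ^ t choose j) * \<gamma> ^ (p ^ t - j)"
    using coeff_linear_poly_power[OF True, of \<gamma> 1] by simp
  then have "v (of_nat (p ^ t choose j)) \<le> v (coeff ([:\<gamma>, 1:] ^ p ^ t) j)"
    using assms(3) by (simp add: v_mult v_power add_increasing2)
  moreover have "real t - real (multiplicity p j) \<le> real (multiplicity p (p ^ t choose j))"
    using multiplicity_prime_power_choose[OF assms(1,4) True] by linarith
  ultimately show ?thesis
    using v_of_nat_ge_multiplicity[OF assms(2)] by (meson ereal_less_eq(3) order_trans)
next
  case False
  then show ?thesis
    by (simp add: coeff_linear_power_eq_0)
qed

end

definition g_coeff :: "nat \<Rightarrow> nat \<Rightarrow> 'a \<Rightarrow> nat \<Rightarrow> 'a::comm_ring_1" where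
  "g_coeff p k b t = (- of_nat p) ^ (k - t div 2) * (if even t then 1 else b)"

definition shifted_g :: "nat \<Rightarrow> nat \<Rightarrow> 'a \<Rightarrow> 'a \<Rightarrow> 'a::comm_ring_1 poly" where
  "shifted_g p k b \<gamma> = (\<Sum>t\<le>2 * k. smult (g_coeff p k b t) ([:\<gamma>, 1:] ^ p ^ t))"

lemma g_coeff_even [simp]: "g_coeff p k b (2 * s) = (- of_nat p) ^ (k - s)"
  by (simp add: g_coeff_def)

lemma g_coeff_odd [simp]: "g_coeff p k b (Suc (2 * s)) = (- of_nat p) ^ (k - s) * b"
  by (simp add: g_coeff_def)

lemma sum_lessThan_double:
  fixes k :: nat
  shows "(\<Sum>t<2 * k. f t) = (\<Sum>s<k. f (2 * s) + f (2 * s + 1))"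
  by (induction k) (simp_all add: algebra_simps)

lemma g_poly_fun_eq_sum:
  "g_poly_fun p k \<beta> \<pi> x = (\<Sum>t\<le>2 * k. g_coeff p k (\<beta> * \<pi>^2) t * x ^ p ^ t)"
proof -
  have reverse: "(\<Sum>n=1..k. f n) = (\<Sum>s<k. f (k - s))" for f :: "nat \<Rightarrow> 'a"
    by (rule sum.reindex_bij_witness[where i="\<lambda>s. k - s" and j="\<lambda>n. k - n"]) auto
  have "(-1) ^ (k - s) * of_nat p ^ (k - s) *
        (x ^ p ^ (2 * k - 2 * (k - s)) + \<beta> * \<pi>^2 * x ^ p ^ (2 * k + 1 - 2 * (k - s)))
      = g_coeff p k (\<beta> * \<pi>^2) (2 * s) * x ^ p ^ (2 * s)
        + g_coeff p k (\<beta> * \<pi>^2) (2 * s + 1) * x ^ p ^ (2 * s + 1)" if "s < k" for s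
  proof -
    have "2 * k - 2 * (k - s) = 2 * s" "2 * k + 1 - 2 * (k - s) = 2 * s + 1"
      using that by auto
    then show ?thesis
      by (simp add: power_minus[of "of_nat p"] distrib_left mult.assoc)
  qed
  then have "(\<Sum>n=1..k. (-1) ^ n * of_nat p ^ n *
        (x ^ p ^ (2 * k - 2 * n) + \<beta> * \<pi>^2 * x ^ p ^ (2 * k + 1 - 2 * n)))
      = (\<Sum>t<2 * k. g_coeff p k (\<beta> * \<pi>^2) t * x ^ p ^ t)"
    unfolding reverse sum_lessThan_double by (intro sum.cong) simp_all
  then show ?thesis
    by (simp add: g_poly_fun_def lessThan_Suc_atMost[symmetric] g_coeff_def)
qed

lemma poly_shifted_g: "poly (shifted_g p k (\<beta> * \<pi>^2) \<gamma>) z = g_poly_fun p k \<beta> \<pi> (\<gamma> + z)"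
  by (simp add: shifted_g_def poly_sum g_poly_fun_eq_sum)

context valued_field
begin

lemma v_g_coeff_ge:
  assumes "v (of_nat p) = 1" "0 \<le> v b"
  shows "ereal (real (k - t div 2)) \<le> v (g_coeff p k b t)"
  using assms by (simp add: g_coeff_def v_mult v_power add_increasing2)

lemma v_g_coeff_even:
  assumes "v (of_nat p) = 1"
  shows "v (g_coeff p k b (2 * m)) = ereal (real (k - m))"
  using assms by (simp add: g_coeff_def v_power)

lemma v_nonneg_if_monic_root:
  assumes root: "x ^ N + (\<Sum>i\<in>I. c i * x ^ e i) = 0"
    and lower: "\<And>i. i \<in> I \<Longrightarrow> e i < N \<and> 0 \<le> v (c i)"
  shows "0 \<le> v x"
proof (rule ccontr)
  assume "\<not> 0 \<le> v x"
  then obtain r where r: "v x = ereal r" "r < 0"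
    by (cases "v x") auto
  have "ereal ((real N - 1) * r) \<le> v (\<Sum>i\<in>I. c i * x ^ e i)"
  proof (rule v_sum_ge)
    fix i assume "i \<in> I"
    with lower have "real (e i) \<le> real N - 1" and c_nonneg: "0 \<le> v (c i)"
      by force+
    then have "ereal ((real N - 1) * r) \<le> ereal (real (e i) * r)"
      using r(2) by (simp add: mult_right_mono_neg)
    then show "ereal ((real N - 1) * r) \<le> v (c i * x ^ e i)"
      using add_increasing[OF c_nonneg] by (simp add: v_mult v_power r)
  qed
  moreover have "v (x ^ N) = ereal (real N * r)" and "real N * r < (real N - 1) * r"
    using r by (simp_all add: v_power algebra_simps)
  ultimately have "v (x ^ N + (\<Sum>i\<in>I. c i * x ^ e i)) = v (x ^ N)"
    by (intro v_add_eq_left) (metis less_ereal.simps(1) order_less_le_trans)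
  then show False
    using root \<open>v (x ^ N) = ereal (real N * r)\<close> by simp
qed

lemma v_root_g_nonneg:
  assumes "1 < p" "v (of_nat p) = 1" "0 \<le> v (\<beta> * \<pi>^2)" "g_poly_fun p k \<beta> \<pi> \<gamma> = 0"
  shows "0 \<le> v \<gamma>"
proof (rule v_nonneg_if_monic_root)
  have "g_poly_fun p k \<beta> \<pi> \<gamma>
      = (\<Sum>t<2 * k. g_coeff p k (\<beta> * \<pi>^2) t * \<gamma> ^ p ^ t) + \<gamma> ^ p ^ (2 * k)"
    by (simp add: g_poly_fun_eq_sum lessThan_Suc_atMost[symmetric] g_coeff_def)
  then show "\<gamma> ^ p ^ (2 * k) + (\<Sum>t<2 * k. g_coeff p k (\<beta> * \<pi>^2) t * \<gamma> ^ p ^ t) = 0"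
    using assms(4) by (simp only: add.commute)
  fix t assume "t \<in> {..<2 * k}"
  then show "p ^ t < p ^ (2 * k) \<and> 0 \<le> v (g_coeff p k (\<beta> * \<pi>^2) t)"
    using assms(1) order_trans[OF _ v_g_coeff_ge[OF assms(2,3)]] by simp
qed

end

lemma coeff_shifted_g:
  "coeff (shifted_g p k b \<gamma>) j = (\<Sum>t\<le>2 * k. g_coeff p k b t * coeff ([:\<gamma>, 1:] ^ p ^ t) j)"
  by (simp add: shifted_g_def coeff_sum)

lemma exists_even_power_level:
  fixes p j k :: nat
  assumes "1 < p" "1 \<le> j"
  shows "\<exists>m\<le>k. p ^ (2 * m) \<le> j \<and> (m < k \<longrightarrow> j < p ^ (2 * m + 2))"
proof (induction k)
  case (Suc k)
  then obtain m where m: "m \<le> k" "p ^ (2 * m) \<le> j" "m < k \<longrightarrow> j < p ^ (2 * m + 2)"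
    by blast
  show ?case
  proof (cases "m < k \<or> j < p ^ (2 * m + 2)")
    case True
    with m show ?thesis
      by (intro exI[of _ m]) auto
  next
    case False
    with m show ?thesis
      by (intro exI[of _ "Suc k"]) auto
  qed
qed (use assms in auto)

context valued_field
begin

lemma v_g_term_ge:
  assumes "prime p" "v (of_nat p) = 1" "0 \<le> v \<gamma>" "0 \<le> v b" "1 \<le> j"
  shows "ereal (real (k - t div 2) + (real t - real (multiplicity p j)))
           \<le> v (g_coeff p k b t * coeff ([:\<gamma>, 1:] ^ p ^ t) j)"
  using add_mono[OF v_g_coeff_ge[OF assms(2,4)] v_coeff_linear_power_prime_power[OF assms(1,2,3,5)]]
  by (simp add: v_mult)

lemma v_coeff_shifted_g_ge:
  assumes p: "prime p" "v (of_nat p) = 1" and "0 \<le> v \<gamma>" "0 \<le> v b"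
    and m: "m \<le> k" "p ^ (2 * m) \<le> j" "m < k \<longrightarrow> j < p ^ (2 * m + 2)"
  shows "ereal (real k - real m) \<le> v (coeff (shifted_g p k b \<gamma>) j)"
  unfolding coeff_shifted_g
proof (rule v_sum_ge)
  fix t assume t: "t \<in> {..2 * k}"
  have p1: "1 < p"
    using p(1) prime_gt_1_nat by blast
  then have j1: "1 \<le> j"
    using m(2) one_le_power[of "p" "2 * m"] by linarith
  show "ereal (real k - real m) \<le> v (g_coeff p k b t * coeff ([:\<gamma>, 1:] ^ p ^ t) j)"
  proof (cases "j \<le> p ^ t")
    case False
    then show ?thesis
      by (simp add: coeff_linear_power_eq_0)
  next
    case True
    define e where "e = multiplicity p j"
    have "p ^ e \<le> j"
      unfolding e_def using j1 by (intro dvd_imp_le multiplicity_dvd) auto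
    then have "e \<le> t" and "2 * m \<le> t"
      using True m(2) power_le_imp_le_exp[OF p1] by (meson order_trans)+
    moreover have "e \<le> 2 * m + 1" if "m < k"
      using \<open>p ^ e \<le> j\<close> m(3) that power_less_imp_less_exp[OF p1, of e "2 * m + 2"] by simp
    moreover have "t div 2 \<le> k" "2 * (t div 2) \<le> t"
      using t by auto
    ultimately have "k + e \<le> (k - t div 2) + t + m"
      using m(1) by (cases "m < k") auto
    then have "real k - real m \<le> real (k - t div 2) + (real t - real e)"
      by linarith
    then show ?thesis
      using v_g_term_ge[OF assms(1-4) j1, of k t] unfolding e_def by (meson ereal_less_eq(3) order_trans)
  qed
qed

lemma v_coeff_shifted_g_at_even_power:
  assumes p: "prime p" "v (of_nat p) = 1" and "0 \<le> v \<gamma>" "0 \<le> v b" "m \<le> k"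
  shows "v (coeff (shifted_g p k b \<gamma>) (p ^ (2 * m))) = ereal (real k - real m)"
proof -
  define c where "c t = g_coeff p k b t * coeff ([:\<gamma>, 1:] ^ p ^ t) (p ^ (2 * m))" for t
  have p1: "1 < p"
    using p(1) prime_gt_1_nat by blast
  have "coeff (shifted_g p k b \<gamma>) (p ^ (2 * m)) = c (2 * m) + (\<Sum>t\<in>{..2 * k} - {2 * m}. c t)"
    unfolding coeff_shifted_g c_def using \<open>m \<le> k\<close> by (subst sum.remove[of _ "2 * m"]) auto
  moreover have main: "v (c (2 * m)) = ereal (real k - real m)"
    using coeff_linear_poly_power[of "p ^ (2 * m)" "p ^ (2 * m)" \<gamma> 1] v_g_coeff_even[OF p(2)] \<open>m \<le> k\<close>
    by (simp add: c_def)
  moreover have rest: "ereal (real k - real m + 1) \<le> v (\<Sum>t\<in>{..2 * k} - {2 * m}. c t)"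
  proof (rule v_sum_ge)
    fix t assume t: "t \<in> {..2 * k} - {2 * m}"
    show "ereal (real k - real m + 1) \<le> v (c t)"
    proof (cases "t < 2 * m")
      case True
      then have "p ^ t < p ^ (2 * m)"
        using p1 by simp
      then show ?thesis
        by (simp add: c_def coeff_linear_power_eq_0)
    next
      case False
      with t have "m + 1 + t div 2 \<le> t" and "t div 2 \<le> k"
        by auto
      then have "real k - real m + 1 \<le> real (k - t div 2) + (real t - real (2 * m))"
        by (simp add: of_nat_diff)
      moreover have "multiplicity p (p ^ (2 * m)) = 2 * m"
        using p(1) by (simp add: prime_imp_prime_elem)
      then have "ereal (real (k - t div 2) + (real t - real (2 * m))) \<le> v (c t)"
        using v_g_term_ge[OF assms(1-4), of "p ^ (2 * m)" k t] p1 unfolding c_def by simp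
      ultimately show ?thesis
        by (meson ereal_less_eq(3) order_trans)
    qed
  qed
  moreover have "v (c (2 * m)) < v (\<Sum>t\<in>{..2 * k} - {2 * m}. c t)"
    using main rest by (simp add: order_less_le_trans[rotated])
  ultimately show ?thesis
    by (simp add: v_add_eq_left)
qed

end

context valued_field
begin

lemma v_shifted_g_le:
  assumes alg_closed: "\<forall>q::'a poly. 0 < degree q \<longrightarrow> (\<exists>x. poly q x = 0)"
    and p: "prime p" "v (of_nat p) = 1" and "0 \<le> v \<gamma>" "0 \<le> v b" "m \<le> k"
    and no_closer_root: "\<And>w. poly (shifted_g p k b \<gamma>) w = 0 \<Longrightarrow> v (z - w) \<le> v z"
    and z: "v z = ereal d"
  shows "v (poly (shifted_g p k b \<gamma>) z) \<le> ereal (real k - real m + real p ^ (2 * m) * d)"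
proof -
  have "shifted_g p k b \<gamma> \<noteq> 0"
    using v_coeff_shifted_g_at_even_power[OF assms(2-5), of k k] by auto
  then have "v (poly (shifted_g p k b \<gamma>) z)
      \<le> v (coeff (shifted_g p k b \<gamma>) (p ^ (2 * m)) * z ^ p ^ (2 * m))"
    using v_poly_le_v_monomial[OF alg_closed _ no_closer_root] by blast
  also have "\<dots> = ereal (real k - real m + real p ^ (2 * m) * d)"
    using v_coeff_shifted_g_at_even_power[OF assms(2-6)] by (simp add: v_mult v_power z)
  finally show ?thesis .
qed

lemma v_shifted_g_ge:
  assumes p: "prime p" "v (of_nat p) = 1" and "0 \<le> v \<gamma>" "0 \<le> v b"
    and root: "poly (shifted_g p k b \<gamma>) 0 = 0" and z: "v z = ereal d" "0 \<le> d"
  shows "\<exists>m\<le>k. ereal (real k - real m + real p ^ (2 * m) * d) \<le> v (poly (shifted_g p k b \<gamma>) z)"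
proof -
  define L where "L m = real k - real m + real p ^ (2 * m) * d" for m
  obtain m where m: "m \<in> {..k}" "Min (L ` {..k}) = L m"
    using obtains_MIN[of "{..k}" L] by auto
  have "ereal (L m) \<le> v (coeff (shifted_g p k b \<gamma>) j * z ^ j)" for j
  proof (cases "j = 0")
    case True
    then show ?thesis
      using root by (simp add: poly_0_coeff_0)
  next
    case False
    have p1: "1 < p"
      using p(1) prime_gt_1_nat by blast
    then obtain l where l: "l \<le> k" "p ^ (2 * l) \<le> j" "l < k \<longrightarrow> j < p ^ (2 * l + 2)"
      using exists_even_power_level[of p j k] False by auto
    have "L m \<le> L l"
      using m l(1) by (metis Min_le atMost_iff finite_atMost finite_imageI image_eqI)
    also have "\<dots> \<le> real k - real l + real j * d"
      using l(2) z(2) unfolding L_def by (simp add: mult_right_mono flip: of_nat_power of_nat_le_iff)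
    finally have "ereal (L m) \<le> ereal (real k - real l) + ereal (real j * d)"
      by simp
    also have "\<dots> \<le> v (coeff (shifted_g p k b \<gamma>) j) + ereal (real j * d)"
      using v_coeff_shifted_g_ge[OF assms(1-4) l] by (rule add_right_mono)
    finally show ?thesis
      by (simp add: v_mult v_power z)
  qed
  then have "ereal (L m) \<le> v (poly (shifted_g p k b \<gamma>) z)"
    unfolding poly_altdef by (intro v_sum_ge)
  then show ?thesis
    using m(1) unfolding L_def by auto
qed

lemma v_g_near_closest_root:
  assumes alg_closed: "\<forall>q::'a poly. 0 < degree q \<longrightarrow> (\<exists>x. poly q x = 0)"
    and p: "prime p" "v (of_nat p) = 1" and b: "0 \<le> v (\<beta> * \<pi>^2)"
    and root: "g_poly_fun p k \<beta> \<pi> \<gamma> = 0"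
    and closest: "\<forall>\<delta>. g_poly_fun p k \<beta> \<pi> \<delta> = 0 \<longrightarrow> v (a - \<delta>) \<le> v (a - \<gamma>)"
    and d: "v (a - \<gamma>) = ereal d"
  shows "\<And>m. m \<le> k \<Longrightarrow> v (g_poly_fun p k \<beta> \<pi> a) \<le> ereal (real k - real m + real p ^ (2 * m) * d)"
    and "0 \<le> d \<Longrightarrow> \<exists>m\<le>k. ereal (real k - real m + real p ^ (2 * m) * d) \<le> v (g_poly_fun p k \<beta> \<pi> a)"
proof -
  define H where "H = shifted_g p k (\<beta> * \<pi>^2) \<gamma>"
  have poly_H: "poly H z = g_poly_fun p k \<beta> \<pi> (\<gamma> + z)" for z
    unfolding H_def by (rule poly_shifted_g)
  have g_a: "g_poly_fun p k \<beta> \<pi> a = poly H (a - \<gamma>)"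
    by (simp add: poly_H)
  have \<gamma>: "0 \<le> v \<gamma>"
    using v_root_g_nonneg[OF prime_gt_1_nat[OF p(1)] p(2) b root] .
  have "v (a - \<gamma> - w) \<le> v (a - \<gamma>)" if "poly H w = 0" for w
    using closest that by (simp add: poly_H diff_diff_eq)
  then show "v (g_poly_fun p k \<beta> \<pi> a) \<le> ereal (real k - real m + real p ^ (2 * m) * d)"
    if "m \<le> k" for m
    unfolding g_a H_def using v_shifted_g_le[OF alg_closed p \<gamma> b that _ d] by blast
  show "\<exists>m\<le>k. ereal (real k - real m + real p ^ (2 * m) * d) \<le> v (g_poly_fun p k \<beta> \<pi> a)"
    if "0 \<le> d"
    unfolding g_a H_def using v_shifted_g_ge[OF p \<gamma> b _ d that] root poly_H[of 0] H_def by simp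
qed

end

lemma newton_level_eq:
  fixes p d y :: real and n m :: nat
  assumes "2 \<le> p"
    and upper: "y \<le> p ^ (2 * n) * d - real n"
    and lower: "p ^ (2 * m) * d - real m \<le> y"
    and slope: "1 < p ^ (2 * n) * (p^2 - 1) * d"
    and small: "y \<le> 1 - real n + 1 / (p^2 - 1)"
  shows "y = p ^ (2 * n) * d - real n"
proof -
  define q where "q = p^2"
  have "2^2 \<le> q"
    unfolding q_def using \<open>2 \<le> p\<close> by (intro power_mono) auto
  then have q: "3 \<le> q"
    by simp
  have pow: "p ^ (2 * i) = q ^ i" for i
    by (simp add: q_def power_mult)
  have slope': "1 < q ^ n * (q - 1) * d"
    using slope by (simp add: pow q_def)
  moreover have "0 < q ^ n * (q - 1)"
    using q by simp
  ultimately have "0 < d"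
    by (smt (verit) zero_less_mult_iff)
  have "q ^ n * d - real n \<le> q ^ m * d - real m"
  proof (cases "n \<le> m")
    case True
    then obtain t where m: "m = n + t"
      using le_Suc_ex by blast
    have "real t \<le> real t * (q ^ n * (q - 1) * d)"
      using slope' by (simp add: mult_le_cancel_left1)
    also have "\<dots> = q ^ n * d * (real t * (q - 1))"
      by simp
    also have "\<dots> \<le> q ^ n * d * (q ^ t - 1)"
      using Bernoulli_inequality[of "q - 1" t] q \<open>0 < d\<close> by (intro mult_left_mono) auto
    finally show ?thesis
      unfolding m by (simp add: power_add algebra_simps)
  next
    case False
    have "q ^ m * d - real m \<le> 1 - real n + 1 / (q - 1)"
      using lower small by (simp add: pow q_def)
    moreover have "1 / (q - 1) < 1" and "0 < q ^ m * d"
      using q \<open>0 < d\<close> by simp_all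
    ultimately have n: "n = Suc m"
      using False by linarith
    with \<open>q ^ m * d - real m \<le> 1 - real n + 1 / (q - 1)\<close> have "q ^ m * d * (q - 1) \<le> 1"
      using q by (simp add: field_simps)
    then show ?thesis
      unfolding n by (simp add: algebra_simps)
  qed
  then show ?thesis
    using upper lower by (simp add: pow)
qed

lemma distance_bounds_from_levels:
  fixes p d x :: real and k n :: nat
  assumes "2 \<le> p"
    and upper: "x \<le> real k - real n + p ^ (2 * n) * d"
    and lower: "0 \<le> d \<Longrightarrow> \<exists>m\<le>k. real k - real m + p ^ (2 * m) * d \<le> x"
    and large: "real k - real n + 1 / (p^2 - 1) < x"
  shows "1 / (p ^ (2 * n) * (p^2 - 1)) < d"
    and "x \<le> real k - real n + 1 + 1 / (p^2 - 1) \<Longrightarrow> d = (x - (real k - real n)) / p ^ (2 * n)"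
proof -
  have pos: "0 < p ^ (2 * n)" "0 < p^2 - 1"
    using \<open>2 \<le> p\<close> by (simp_all add: less_1_mult power2_eq_square)
  have "1 / (p^2 - 1) < p ^ (2 * n) * d"
    using upper large by simp
  then have slope: "1 < p ^ (2 * n) * (p^2 - 1) * d"
    using pos by (simp add: field_simps)
  then show "1 / (p ^ (2 * n) * (p^2 - 1)) < d"
    using pos by (simp add: field_simps)
  then have "0 \<le> d"
    using pos by (smt (verit) divide_pos_pos mult_pos_pos)
  then obtain m where "real k - real m + p ^ (2 * m) * d \<le> x"
    using lower by blast
  moreover assume "x \<le> real k - real n + 1 + 1 / (p^2 - 1)"
  ultimately have "x - real k = p ^ (2 * n) * d - real n"
    using newton_level_eq[OF \<open>2 \<le> p\<close> _ _ slope, of "x - real k" m] upper by simp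
  then show "d = (x - (real k - real n)) / p ^ (2 * n)"
    using \<open>2 \<le> p\<close> by (simp add: eq_divide_eq algebra_simps)
qed

theorem mainTheorem17:
  fixes p k e n :: nat and v :: "'a::field_char_0 \<Rightarrow> ereal"
    and \<beta> \<pi> a \<gamma> :: 'a
  assumes "prime p" and "p > 3"
    and "e \<in> {3, 4, 6}" and "e dvd p + 1"
    and "k \<ge> 1"
    and "is_Cp_model p v"
    and "\<pi> ^ e = - of_nat p"
    and "\<beta> \<in> Qp_set v" and "v \<beta> \<ge> 0"
    and "n \<le> k"
    and "g_poly_fun p k \<beta> \<pi> \<gamma> = 0"
    and "\<forall>\<delta>. g_poly_fun p k \<beta> \<pi> \<delta> = 0 \<longrightarrow> v (a - \<delta>) \<le> v (a - \<gamma>)"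
    and "v (g_poly_fun p k \<beta> \<pi> a) > ereal (real k - real n + 1 / (real p ^ 2 - 1))"
  shows "v (a - \<gamma>) > ereal (1 / (real p ^ (2*n) * (real p ^ 2 - 1))) \<and>
         (v (g_poly_fun p k \<beta> \<pi> a) \<le> ereal (real k - real n + 1 + 1 / (real p ^ 2 - 1)) \<longrightarrow>
         v (a - \<gamma>) = ereal (1 / real p ^ (2*n)) * (v (g_poly_fun p k \<beta> \<pi> a) - ereal (real k - real n)))"
proof -
  interpret valued_field v
    using assms(6) unfolding is_Cp_model_def by unfold_locales blast
  have vp: "v (of_nat p) = 1" and alg_closed: "\<forall>q::'a poly. 0 < degree q \<longrightarrow> (\<exists>x. poly q x = 0)"
    using assms(6) unfolding is_Cp_model_def by blast+
  have "0 \<le> v \<pi>"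
    using v_nonneg_of_power_nonneg[of e \<pi>] assms(3,7) vp by auto
  with assms(9) have vb: "0 \<le> v (\<beta> * \<pi>^2)"
    by (simp add: v_mult v_power)
  show ?thesis
  proof (cases "a = \<gamma>")
    case True
    then show ?thesis
      using assms(11) by simp
  next
    case False
    then obtain d where d: "v (a - \<gamma>) = ereal d"
      using v_finite[of "a - \<gamma>"] by auto
    note levels = v_g_near_closest_root[OF alg_closed assms(1) vp vb assms(11,12) d]
    obtain x where x: "v (g_poly_fun p k \<beta> \<pi> a) = ereal x"
      using levels(1)[of 0] assms(13) by (cases "v (g_poly_fun p k \<beta> \<pi> a)") auto
    have "2 \<le> real p"
      using assms(2) by simp
    note distance = distance_bounds_from_levels[OF this, of x k n d]
    show ?thesis
      using distance levels x d assms(10,13) by simp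
  qed
qed

end
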